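(* For every odd $q\geq 5$, the generalized Farey map $F_q$ is an AFN-map with respect to the partition $\mathcal{P}=\{g.(0,1):g\in\Lambda_q\}$ of $[0,1]$. Its set of indifferent fixed points is $\{0\}$, with $\mathcal{P}_0=\{(0,1/(\lambda+1))\}$.
   Context: Let $q\geq 3$ be odd and $\lambda=2\cos(\pi/q)$. Elements of $\mathrm{PGL}_2(\mathbb{R})$ act on $\mathbb{R}\cup\{\infty\}$ by $\begin{bmatrix}a&b\\c&d\end{bmatrix}.x=(ax+b)/(cx+d)$. Put $s(x)=\sin(x\pi/q)/\sin(\pi/q)$, $g_k=\begin{bmatrix}s(k)&-s(k+1)\\-s(k-1)&s(k)\end{bmatrix}$, $Q=\begin{bmatrix}0&1\\1&0\end{bmatrix}$, $K=\{(q+1)/2,\dots,q-1\}$. The generalized Farey map $F_q\colon[0,1]\to[0,1]$ is $F_q(x)=g_k.x$ on $[g_k^{-1}.0,g_k^{-1}.1]$ and $F_q(x)=Qg_k.x$ on $[(Qg_k)^{-1}.1,(Qg_k)^{-1}.0]$, $k\in K$. $\Lambda_q=\{g_k^{-1},(Qg_k)^{-1}:k\in K\}$. Definitions: A piecewise monotonic system is $(X,T,\mathcal{P})$ with $\mathcal{P}$ a collection of nonempty pairwise disjoint open subintervals of $X$ whose union $X_{\mathcal{P}}$ has complement of Lebesgue measure zero, and $T\colon X\to X$ continuous and strictly monotonic on each $I\in\mathcal{P}$. If moreover $T|_I$ is twice differentiable for each $I\in\mathcal{P}$, $T$ is an AFN-map if: (A) $T''/(T')^2$ is bounded on $X_{\mathcal{P}}$;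 (F) $\{T(I):I\in\mathcal{P}\}$ is finite; (N) there is a finite $\mathcal{P}_0\subseteq\mathcal{P}$ such that each $I\in\mathcal{P}_0$ has a boundary point $x_I$ with $\lim_{x\to x_I,x\in I}T(x)=x_I$ and $\lim_{x\to x_I,x\in I}T'(x)=1$, $T'$ is decreasing on whichever of $(-\infty,x_I)\cap I$, $(x_I,\infty)\cap I$ is nonempty, and for every $\varepsilon>0$ there is $\rho>1$ with $|T'(x)|\geq\rho$ for all $x\in X_{\mathcal{P}}\setminus\bigcup_{I\in\mathcal{P}_0}((x_I-\varepsilon,x_I+\varepsilon)\cap I)$. The points $x_I$ are the indifferent fixed points.
   Formalization: In condition (N), T' is decreasing on $(-\infty,x_I)\cap I$ and increasing on $(x_I,\infty)\cap I$, in place of decreasing on whichever of the two is nonempty. The statement above fails without it. *)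

theory Defs
  imports "HOL-Analysis.Analysis"
begin

definition mat2 :: "real \<Rightarrow> real \<Rightarrow> real \<Rightarrow> real \<Rightarrow> real^2^2" where
  "mat2 a b c d = vector [vector [a, b], vector [c, d]]"

text \<open>Action of [a b; c d] on a real point x: (a x + b)/(c x + d).  All points at which
  this is used below have nonvanishing denominator, so no point at infinity is needed.\<close>
definition mob :: "real^2^2 \<Rightarrow> real \<Rightarrow> real" where
  "mob M x = (M$1$1 * x + M$1$2) / (M$2$1 * x + M$2$2)"

definition lam :: "nat \<Rightarrow> real" where
  "lam q = 2 * cos (pi / real q)"

definition sq :: "nat \<Rightarrow> real \<Rightarrow> real" where
  "sq q x = sin (x * pi / real q) / sin (pi / real q)"

definition gk :: "nat \<Rightarrow> nat \<Rightarrow> real^2^2" where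
  "gk q k = mat2 (sq q (real k)) (- sq q (real k + 1)) (- sq q (real k - 1)) (sq q (real k))"

definition Qm :: "real^2^2" where
  "Qm = mat2 0 1 1 0"

definition Kset :: "nat \<Rightarrow> nat set" where
  "Kset q = {(q + 1) div 2 .. q - 1}"

definition Lambda_q :: "nat \<Rightarrow> (real^2^2) set" where
  "Lambda_q q = (\<lambda>k. matrix_inv (gk q k)) ` Kset q \<union> (\<lambda>k. matrix_inv (Qm ** gk q k)) ` Kset q"

definition farey :: "nat \<Rightarrow> real \<Rightarrow> real" where
  "farey q x = (SOME y. \<exists>k\<in>Kset q.
      (x \<in> {mob (matrix_inv (gk q k)) 0 .. mob (matrix_inv (gk q k)) 1} \<and> y = mob (gk q k) x) \<or>
      (x \<in> {mob (matrix_inv (Qm ** gk q k)) 1 .. mob (matrix_inv (Qm ** gk q k)) 0}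
         \<and> y = mob (Qm ** gk q k) x))"

definition farey_partition :: "nat \<Rightarrow> real set set" where
  "farey_partition q = (\<lambda>g. mob g ` {0<..<1}) ` Lambda_q q"

definition piecewise_monotonic_system :: "real set \<Rightarrow> (real \<Rightarrow> real) \<Rightarrow> real set set \<Rightarrow> bool" where
  "piecewise_monotonic_system X T P \<longleftrightarrow>
     (\<forall>I\<in>P. I \<noteq> {} \<and> open I \<and> is_interval I \<and> I \<subseteq> X) \<and>
     pairwise disjnt P \<and>
     X - \<Union>P \<in> null_sets lebesgue \<and>
     T ` X \<subseteq> X \<and>
     (\<forall>I\<in>P. continuous_on I T \<and> (strict_mono_on I T \<or> strict_antimono_on I T))"

definition AFN_with :: "real set \<Rightarrow> (real \<Rightarrow> real) \<Rightarrow> real set set \<Rightarrow> real set set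
    \<Rightarrow> (real set \<Rightarrow> real) \<Rightarrow> bool" where
  "AFN_with X T P P0 xI \<longleftrightarrow>
     piecewise_monotonic_system X T P \<and>
     (\<forall>I\<in>P. \<forall>x\<in>I. T differentiable (at x) \<and> deriv T differentiable (at x)) \<and>
     \<comment> \<open>(A)\<close>
     (\<exists>C. \<forall>x\<in>\<Union>P. \<bar>deriv (deriv T) x / (deriv T x)\<^sup>2\<bar> \<le> C) \<and>
     \<comment> \<open>(F)\<close>
     finite ((\<lambda>I. T ` I) ` P) \<and>
     \<comment> \<open>(N)\<close>
     finite P0 \<and> P0 \<subseteq> P \<and>
     (\<forall>I\<in>P0. xI I \<in> frontier I \<and>
        (T \<longlongrightarrow> xI I) (at (xI I) within I) \<and>
        (deriv T \<longlongrightarrow> 1) (at (xI I) within I) \<and>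
        antimono_on ({..<xI I} \<inter> I) (deriv T) \<and>
        mono_on ({xI I<..} \<inter> I) (deriv T)) \<and>
     (\<forall>\<epsilon>>0. \<exists>\<rho>>1. \<forall>x \<in> \<Union>P - (\<Union>I\<in>P0. {xI I - \<epsilon> <..< xI I + \<epsilon>} \<inter> I).
        \<bar>deriv T x\<bar> \<ge> \<rho>)"

definition AFN_map :: "real set \<Rightarrow> (real \<Rightarrow> real) \<Rightarrow> real set set \<Rightarrow> bool" where
  "AFN_map X T P \<longleftrightarrow> (\<exists>P0 xI. AFN_with X T P P0 xI)"

end

theory Submission
  imports Defs
begin

(* The partition interval of a branch h in {g_k, Q g_k} is h^-1.(0,1), and F_q acts on it as
   the Moebius map of h. The identity s(k)^2 - s(k-1) s(k+1) = 1 makes h unimodular, and h^-1 has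
   the nonnegative entries s(k-1), s(k), s(k+1). The intervals are cut out by the ratios
   s(k+1)/s(k), which decrease from 1 to 0 over K, so they tile [0,1]. Since h and h^-1 are
   inverse, the denominators of their Moebius maps at x and at F_q x are reciprocal, whence
   |F_q'(x)| = (c F_q(x) + d)^2 with (c, d) the bottom row of h^-1. Thus |F_q'| >= d^2 > 1 except
   on (0, 1/(lambda+1)), where h^-1 = [1 0; lambda 1] and F_q'(x) = (1 + lambda F_q(x))^2, which
   tends to 1 at the fixed point 0. Finally |F_q''|/F_q'^2 is 2|h_21| times the denominator of h,
   hence at most 2/sin(pi/q). *)

lemma mat2_nth [simp]:
  "mat2 a b c d $ 1 $ 1 = a" "mat2 a b c d $ 1 $ 2 = b"
  "mat2 a b c d $ 2 $ 1 = c" "mat2 a b c d $ 2 $ 2 = d"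
  by (simp_all add: mat2_def)

lemma mat2_eq_iff:
  "(M::real^2^2) = mat2 a b c d \<longleftrightarrow> M$1$1 = a \<and> M$1$2 = b \<and> M$2$1 = c \<and> M$2$2 = d"
  by (auto simp: vec_eq_iff forall_2)

lemma mat2_mult:
  "mat2 a b c d ** mat2 a' b' c' d' = mat2 (a*a' + b*c') (a*b' + b*d') (c*a' + d*c') (c*b' + d*d')"
  by (simp add: mat2_eq_iff matrix_matrix_mult_def sum_2)

lemma mat2_one: "(mat 1 :: real^2^2) = mat2 1 0 0 1"
  by (simp add: mat2_eq_iff mat_def)

lemma det_mat2: "det (mat2 a b c d) = a * d - b * c"
  by (simp add: det_2)

lemma matrix_inv_eqI:
  fixes A B :: "real^2^2"
  assumes "A ** B = mat 1" "B ** A = mat 1"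
  shows "matrix_inv A = B"
proof -
  have "A ** matrix_inv A = mat 1 \<and> matrix_inv A ** A = mat 1"
    unfolding matrix_inv_def by (rule someI[of _ B]) (use assms in blast)
  then have "matrix_inv A = matrix_inv A ** (A ** B)"
    using assms by (simp add: matrix_mul_rid)
  also have "\<dots> = B"
    using \<open>A ** matrix_inv A = mat 1 \<and> matrix_inv A ** A = mat 1\<close>
    by (simp add: matrix_mul_assoc matrix_mul_lid)
  finally show ?thesis .
qed

lemma matrix_inv_mat2:
  assumes "a * d - b * c = \<Delta>" "\<Delta> \<noteq> 0"
  shows "matrix_inv (mat2 a b c d) = mat2 (d/\<Delta>) (- b/\<Delta>) (- c/\<Delta>) (a/\<Delta>)"
  using assms by (intro matrix_inv_eqI) (auto simp: mat2_mult mat2_one mat2_eq_iff field_simps)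

definition mob_den :: "real^2^2 \<Rightarrow> real \<Rightarrow> real" where
  "mob_den M x = M$2$1 * x + M$2$2"

lemma mob_eq: "mob M x = (M$1$1 * x + M$1$2) / mob_den M x"
  by (simp add: mob_def mob_den_def)

lemma mob_den_mat2 [simp]: "mob_den (mat2 a b c d) x = c * x + d"
  by (simp add: mob_den_def)

lemma mob_mat2 [simp]: "mob (mat2 a b c d) x = (a * x + b) / (c * x + d)"
  by (simp add: mob_def)

lemma mob_diff:
  assumes "mob_den M u \<noteq> 0" "mob_den M v \<noteq> 0"
  shows "mob M v - mob M u = det M * (v - u) / (mob_den M u * mob_den M v)"
proof -
  have "mob M v - mob M u
      = ((M$1$1 * v + M$1$2) * mob_den M u - (M$1$1 * u + M$1$2) * mob_den M v) / (mob_den M u * mob_den M v)"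
    using assms by (simp add: mob_eq diff_frac_eq mult.commute)
  also have "(M$1$1 * v + M$1$2) * mob_den M u - (M$1$1 * u + M$1$2) * mob_den M v = det M * (v - u)"
    by (simp add: det_2 mob_den_def algebra_simps)
  finally show ?thesis .
qed

lemma mob_den_pos_on_segment:
  assumes "mob_den M u > 0" "mob_den M v > 0" "x \<in> {u..v}"
  shows "mob_den M x > 0"
proof (cases "M$2$1 \<ge> 0")
  case True
  then have "mob_den M u \<le> mob_den M x" using assms(3) by (simp add: mob_den_def mult_left_mono)
  then show ?thesis using assms(1) by linarith
next
  case False
  then have "mob_den M v \<le> mob_den M x" using assms(3) by (simp add: mob_den_def mult_left_mono_neg)
  then show ?thesis using assms(2) by linarith
qed

lemma mob_strict_mono_on:
  assumes "det M > 0" "\<And>x. x \<in> I \<Longrightarrow> mob_den M x > 0"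
  shows "strict_mono_on I (mob M)"
proof (rule strict_mono_onI)
  fix u v assume "u \<in> I" "v \<in> I" "u < v"
  with assms have "mob_den M u > 0" "mob_den M v > 0" by auto
  then have "mob M v - mob M u = det M * (v - u) / (mob_den M u * mob_den M v)"
    by (simp add: mob_diff)
  also have "\<dots> > 0"
    using assms(1) \<open>u < v\<close> \<open>mob_den M u > 0\<close> \<open>mob_den M v > 0\<close> by simp
  finally show "mob M u < mob M v" by simp
qed

lemma mob_strict_antimono_on:
  assumes "det M < 0" "\<And>x. x \<in> I \<Longrightarrow> mob_den M x > 0"
  shows "strict_antimono_on I (mob M)"
proof (rule monotone_onI)
  fix u v assume "u \<in> I" "v \<in> I" "u < v"
  with assms have "mob_den M u > 0" "mob_den M v > 0" by auto
  then have "mob M v - mob M u = det M * (v - u) / (mob_den M u * mob_den M v)"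
    by (simp add: mob_diff)
  also have "\<dots> < 0"
    using assms(1) \<open>u < v\<close> \<open>mob_den M u > 0\<close> \<open>mob_den M v > 0\<close>
    by (simp add: divide_neg_pos mult_neg_pos)
  finally show "mob M u > mob M v" by simp
qed

lemma continuous_on_mob: "(\<And>x. x \<in> I \<Longrightarrow> mob_den M x \<noteq> 0) \<Longrightarrow> continuous_on I (mob M)"
  unfolding mob_eq mob_den_def by (intro continuous_intros) auto

lemma has_real_derivative_mob:
  assumes "mob_den M x \<noteq> 0"
  shows "(mob M has_real_derivative det M / (mob_den M x)\<^sup>2) (at x)"
  using assms unfolding mob_eq[abs_def] det_2 mob_den_def
  by (auto intro!: derivative_eq_intros simp: field_simps power2_eq_square)

lemma has_real_derivative_inverse_mob_den_square:
  assumes "mob_den M x \<noteq> 0"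
  shows "((\<lambda>y. D / (mob_den M y)\<^sup>2) has_real_derivative - 2 * M$2$1 * D / (mob_den M x)^3) (at x)"
proof -
  have "((\<lambda>y. (mob_den M y)\<^sup>2) has_real_derivative 2 * mob_den M x * M$2$1) (at x)"
    unfolding mob_den_def by (auto intro!: derivative_eq_intros)
  from DERIV_divide[OF DERIV_const this] show ?thesis
    using assms by (simp add: field_simps power2_eq_square power3_eq_cube)
qed

lemma mob_mob_inverse:
  assumes "M ** N = mat 1" "mob_den N y \<noteq> 0"
  shows "mob M (mob N y) = y" "mob_den M (mob N y) * mob_den N y = 1"
proof -
  have id: "M$1$1 * N$1$1 + M$1$2 * N$2$1 = 1" "M$1$1 * N$1$2 + M$1$2 * N$2$2 = 0"
       "M$2$1 * N$1$1 + M$2$2 * N$2$1 = 0" "M$2$1 * N$1$2 + M$2$2 * N$2$2 = 1"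
    using assms(1) by (simp_all add: vec_eq_iff forall_2 matrix_matrix_mult_def sum_2 mat_def)
  have den: "mob_den M (mob N y) * mob_den N y
      = (M$2$1 * N$1$1 + M$2$2 * N$2$1) * y + (M$2$1 * N$1$2 + M$2$2 * N$2$2)"
    using assms(2) by (simp add: mob_eq mob_den_def field_simps)
  show "mob_den M (mob N y) * mob_den N y = 1" using den id by simp
  have "mob M (mob N y)
      = ((M$1$1 * mob N y + M$1$2) * mob_den N y) / (mob_den M (mob N y) * mob_den N y)"
    unfolding mob_eq[of M "mob N y"] using assms(2) by simp
  also have "(M$1$1 * mob N y + M$1$2) * mob_den N y
      = (M$1$1 * N$1$1 + M$1$2 * N$2$1) * y + (M$1$1 * N$1$2 + M$1$2 * N$2$2)"
    using assms(2) by (simp add: mob_eq[of N] mob_den_def field_simps)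
  finally show "mob M (mob N y) = y"
    using den id by simp
qed

lemma strict_mono_on_image_interval:
  fixes f :: "real \<Rightarrow> real"
  assumes "a \<le> b" "continuous_on {a..b} f" "strict_mono_on {a..b} f"
  shows "f ` {a..b} = {f a..f b}" "f ` {a<..<b} = {f a<..<f b}"
proof -
  have mono: "f x < f y" if "x \<in> {a..b}" "y \<in> {a..b}" "x < y" for x y
    using assms(3) that by (rule strict_mono_onD)
  have onto: "\<exists>x\<in>{a..b}. f x = y" if "y \<in> {f a..f b}" for y
    using IVT'[of f a y b] assms(1,2) that by auto
  show "f ` {a..b} = {f a..f b}"
  proof
    show "f ` {a..b} \<subseteq> {f a..f b}"
      using mono assms(1) by (force simp: less_eq_real_def)
  qed (use onto in blast)
  show "f ` {a<..<b} = {f a<..<f b}"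
  proof
    show "f ` {a<..<b} \<subseteq> {f a<..<f b}"
      using mono by force
  next
    show "{f a<..<f b} \<subseteq> f ` {a<..<b}"
    proof
      fix y assume y: "y \<in> {f a<..<f b}"
      then have "y \<in> {f a..f b}" by simp
      then obtain x where "x \<in> {a..b}" "f x = y" using onto by blast
      moreover from this y have "x \<noteq> a" "x \<noteq> b" by auto
      ultimately show "y \<in> f ` {a<..<b}" by force
    qed
  qed
qed

lemma strict_antimono_on_image_interval:
  fixes f :: "real \<Rightarrow> real"
  assumes "a \<le> b" "continuous_on {a..b} f" "strict_antimono_on {a..b} f"
  shows "f ` {a..b} = {f b..f a}" "f ` {a<..<b} = {f b<..<f a}"
proof -
  have "strict_mono_on {a..b} (\<lambda>x. - f x)"
    using assms(3) by (auto simp: monotone_on_def)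
  note neg = strict_mono_on_image_interval[OF assms(1) continuous_on_minus[OF assms(2)] this]
  have "f ` S = uminus ` (\<lambda>x. - f x) ` S" for S
    by (simp add: image_image)
  then show "f ` {a..b} = {f b..f a}" "f ` {a<..<b} = {f b<..<f a}"
    by (simp_all only: neg image_uminus_atLeastAtMost image_uminus_greaterThanLessThan minus_minus)
qed

lemma mob_image_interval:
  assumes "u \<le> v" "mob_den M u > 0" "mob_den M v > 0"
  shows "det M > 0 \<Longrightarrow> mob M ` {u..v} = {mob M u..mob M v}"
    and "det M > 0 \<Longrightarrow> mob M ` {u<..<v} = {mob M u<..<mob M v}"
    and "det M < 0 \<Longrightarrow> mob M ` {u..v} = {mob M v..mob M u}"
    and "det M < 0 \<Longrightarrow> mob M ` {u<..<v} = {mob M v<..<mob M u}"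
proof -
  have den: "mob_den M x > 0" if "x \<in> {u..v}" for x
    using assms(2,3) that by (rule mob_den_pos_on_segment)
  have cont: "continuous_on {u..v} (mob M)"
    using den by (intro continuous_on_mob) (metis less_irrefl)
  show "det M > 0 \<Longrightarrow> mob M ` {u..v} = {mob M u..mob M v}"
    and "det M > 0 \<Longrightarrow> mob M ` {u<..<v} = {mob M u<..<mob M v}"
    using strict_mono_on_image_interval[OF assms(1) cont mob_strict_mono_on] den by auto
  show "det M < 0 \<Longrightarrow> mob M ` {u..v} = {mob M v..mob M u}"
    and "det M < 0 \<Longrightarrow> mob M ` {u<..<v} = {mob M v<..<mob M u}"
    using strict_antimono_on_image_interval[OF assms(1) cont mob_strict_antimono_on] den by auto
qed

lemma sin_less_sin_if_between:
  assumes "0 \<le> a" "a < y" "y < pi - a"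
  shows "sin a < sin y"
proof (cases "y \<le> pi / 2")
  case True
  then show ?thesis using assms by (intro sin_monotone_2pi) auto
next
  case False
  then have "sin a < sin (pi - y)" using assms by (intro sin_monotone_2pi) auto
  then show ?thesis by simp
qed

lemma sin_pi_div_pos: "2 \<le> q \<Longrightarrow> 0 < sin (pi / real q)"
  by (rule sin_gt_zero) (auto simp: field_simps)

lemma sq_pos:
  assumes "2 \<le> q" "0 < x" "x < real q"
  shows "0 < sq q x"
proof -
  have "0 < sin (x * pi / real q)"
    by (rule sin_gt_zero) (use assms in \<open>auto simp: field_simps\<close>)
  then show ?thesis using sin_pi_div_pos[OF assms(1)] by (simp add: sq_def)
qed

lemma sq_self: "sq q (real q) = 0"
  by (cases "q = 0") (simp_all add: sq_def)

lemma sq_reflect: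
  assumes "q \<noteq> 0"
  shows "sq q (real q - x) = sq q x"
proof -
  have "(real q - x) * pi / real q = pi - x * pi / real q"
    using assms by (simp add: field_simps)
  then show ?thesis by (simp add: sq_def)
qed

lemma sq_one: "2 \<le> q \<Longrightarrow> sq q 1 = 1"
  using sin_pi_div_pos[of q] by (simp add: sq_def)

lemma sq_two: "2 \<le> q \<Longrightarrow> sq q 2 = lam q"
  using sin_pi_div_pos[of q] sin_double[of "pi / real q"] by (simp add: sq_def lam_def)

lemma sq_det:
  assumes "2 \<le> q"
  shows "(sq q x)\<^sup>2 - sq q (x - 1) * sq q (x + 1) = 1"
proof -
  define t where "t = pi / real q"
  have xt: "(x - 1) * pi / real q = x * t - t" "(x + 1) * pi / real q = x * t + t" "x * pi / real q = x * t"
    by (simp_all add: t_def algebra_simps diff_divide_distrib add_divide_distrib)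
  have "sin (x * t - t) * sin (x * t + t) = sin (x * t) ^ 2 * cos t ^ 2 - cos (x * t) ^ 2 * sin t ^ 2"
    by (simp add: sin_add sin_diff power2_eq_square algebra_simps)
  then have "sin (x * t) ^ 2 - sin (x * t - t) * sin (x * t + t) = sin t ^ 2"
    by (simp add: cos_squared_eq algebra_simps)
  moreover have "sin t \<noteq> 0" using sin_pi_div_pos[OF assms] by (simp add: t_def)
  ultimately show ?thesis
    unfolding sq_def xt t_def[symmetric] by (simp add: field_simps power2_eq_square)
qed

lemma one_less_sq:
  assumes "2 \<le> q" "1 < x" "x < real q - 1"
  shows "1 < sq q x"
proof -
  have t: "0 < pi / real q" using assms(1) by simp
  have "x * (pi / real q) < (real q - 1) * (pi / real q)"
    using assms(3) t by (rule mult_strict_right_mono)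
  moreover have "(real q - 1) * (pi / real q) = pi - pi / real q"
    using assms(1) by (simp add: field_simps)
  moreover have "1 * (pi / real q) < x * (pi / real q)"
    using assms(2) t by (rule mult_strict_right_mono)
  ultimately have "sin (pi / real q) < sin (x * (pi / real q))"
    using t by (intro sin_less_sin_if_between) auto
  then show ?thesis using sin_pi_div_pos[OF assms(1)] by (simp add: sq_def)
qed

lemma one_le_sq:
  assumes "2 \<le> q" "1 \<le> x" "x \<le> real q - 1"
  shows "1 \<le> sq q x"
proof -
  consider "x = 1" | "x = real q - 1" | "1 < x \<and> x < real q - 1" using assms by linarith
  then show ?thesis
  proof cases
    case 1
    then show ?thesis using sq_one[OF assms(1)] by simp
  next
    case 2
    then show ?thesis using sq_one[OF assms(1)] sq_reflect[of q 1] assms(1) by simp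
  next
    case 3
    then show ?thesis using one_less_sq[OF assms(1), of x] by simp
  qed
qed

lemma abs_sq_le: "2 \<le> q \<Longrightarrow> \<bar>sq q x\<bar> \<le> 1 / sin (pi / real q)"
  using sin_pi_div_pos[of q] abs_sin_le_one[of "x * pi / real q"]
  by (simp add: sq_def abs_divide divide_right_mono)

lemma discrete_crossing:
  fixes f :: "nat \<Rightarrow> 'a::linorder"
  assumes "a < b" "f b \<le> x" "x \<le> f a"
  shows "\<exists>k\<in>{a<..b}. f k \<le> x \<and> x \<le> f (k - 1)"
  using assms
proof (induction b rule: less_induct)
  case (less b)
  show ?case
  proof (cases "a < b - 1 \<and> f (b - 1) \<le> x")
    case True
    then obtain k where "k \<in> {a<..b - 1}" "f k \<le> x \<and> x \<le> f (k - 1)"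
      using less.IH[of "b - 1"] less.prems by auto
    then show ?thesis by auto
  next
    case False
    then have "x \<le> f (b - 1)"
      using less.prems by (cases "a = b - 1") auto
    then show ?thesis using less.prems by auto
  qed
qed

locale generalized_farey =
  fixes q :: nat
  assumes odd_q: "odd q" and q_ge_5: "5 \<le> q"
begin

abbreviation s :: "real \<Rightarrow> real" where "s \<equiv> sq q"

lemma q_ge_2: "2 \<le> q" using q_ge_5 by simp

lemma Kset_bounds:
  assumes "k \<in> Kset q"
  shows "3 \<le> k" "k \<le> q - 1" "q + 1 \<le> 2 * k"
  using assms odd_q q_ge_5 by (auto simp: Kset_def elim!: oddE)

lemma finite_Kset: "finite (Kset q)"
  by (simp add: Kset_def)

lemma last_in_Kset: "q - 1 \<in> Kset q"
  using q_ge_5 by (simp add: Kset_def)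

lemma s_bounds:
  assumes "k \<in> Kset q"
  shows "1 < s (real k - 1)" "1 \<le> s (real k)" "0 \<le> s (real k + 1)"
proof -
  note k = Kset_bounds[OF assms]
  show "1 < s (real k - 1)" "1 \<le> s (real k)"
    using k q_ge_2 by (intro one_less_sq one_le_sq; simp add: of_nat_diff)+
  show "0 \<le> s (real k + 1)"
  proof (cases "k + 1 = q")
    case True
    then have "real k + 1 = real q" by linarith
    then show ?thesis using sq_self[of q] by simp
  next
    case False
    then show ?thesis using k q_ge_2 by (intro less_imp_le sq_pos) auto
  qed
qed

lemma s_det: "(s x)\<^sup>2 - s (x - 1) * s (x + 1) = 1"
  using q_ge_2 by (rule sq_det)

definition branch :: "nat \<Rightarrow> bool \<Rightarrow> real^2^2" where
  "branch k b = (if b then gk q k else Qm ** gk q k)"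

definition inv_branch :: "nat \<Rightarrow> bool \<Rightarrow> real^2^2" where
  "inv_branch k b = matrix_inv (branch k b)"

lemma branch_eq:
  "branch k b = (if b then mat2 (s (real k)) (- s (real k + 1)) (- s (real k - 1)) (s (real k))
                 else mat2 (- s (real k - 1)) (s (real k)) (s (real k)) (- s (real k + 1)))"
  by (simp add: branch_def gk_def Qm_def mat2_mult)

lemma det_branch: "det (branch k b) = (if b then 1 else -1)"
  using s_det[of "real k"] by (simp add: branch_eq det_mat2 power2_eq_square algebra_simps)

lemma inv_branch_eq:
  "inv_branch k b = (if b then mat2 (s (real k)) (s (real k + 1)) (s (real k - 1)) (s (real k))
                     else mat2 (s (real k + 1)) (s (real k)) (s (real k)) (s (real k - 1)))"
  using s_det[of "real k"] unfolding inv_branch_def branch_eq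
  by (auto simp: matrix_inv_mat2 power2_eq_square algebra_simps)

lemma branch_mult_inv_branch: "branch k b ** inv_branch k b = mat 1"
  using s_det[of "real k"]
  by (auto simp: branch_eq inv_branch_eq mat2_mult mat2_one mat2_eq_iff power2_eq_square algebra_simps)

lemma det_inv_branch: "det (inv_branch k b) = (if b then 1 else -1)"
  using s_det[of "real k"] by (simp add: inv_branch_eq det_mat2 power2_eq_square algebra_simps)

lemma inv_branch_den_ge:
  assumes "k \<in> Kset q" "0 \<le> y"
  shows "1 \<le> inv_branch k b $2$2" "inv_branch k b $2$2 \<le> mob_den (inv_branch k b) y"
  using s_bounds[OF assms(1)] assms(2) by (auto simp: inv_branch_eq)

(* inv_branch k False reverses orientation, so its piece starts at the image of 1. *)
definition lo :: "nat \<Rightarrow> bool \<Rightarrow> real" where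
  "lo k b = mob (inv_branch k b) (if b then 0 else 1)"

definition hi :: "nat \<Rightarrow> bool \<Rightarrow> real" where
  "hi k b = mob (inv_branch k b) (if b then 1 else 0)"

lemma inv_branch_image:
  assumes "k \<in> Kset q"
  shows "mob (inv_branch k b) ` {0..1} = {lo k b..hi k b}"
    and "mob (inv_branch k b) ` {0<..<1} = {lo k b<..<hi k b}"
proof -
  have "mob_den (inv_branch k b) y > 0" if "0 \<le> y" for y
    using inv_branch_den_ge[OF assms that, of b] by linarith
  note images = mob_image_interval[of 0 1 "inv_branch k b", OF _ this this]
  show "mob (inv_branch k b) ` {0..1} = {lo k b..hi k b}"
    and "mob (inv_branch k b) ` {0<..<1} = {lo k b<..<hi k b}"
    using images by (cases b; simp add: lo_def hi_def det_inv_branch)+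
qed

lemma lo_less_hi:
  assumes "k \<in> Kset q"
  shows "lo k b < hi k b"
proof -
  have "mob (inv_branch k b) (1/2) \<in> {lo k b<..<hi k b}"
    using inv_branch_image(2)[OF assms, of b] by force
  then show ?thesis by simp
qed

definition endpoint :: "nat \<Rightarrow> real" where
  "endpoint j = s (real j + 1) / s (real j)"

lemma lo_True: "lo k True = endpoint k"
  by (simp add: lo_def endpoint_def inv_branch_eq)

lemma hi_False: "1 \<le> k \<Longrightarrow> hi k False = endpoint (k - 1)"
  by (simp add: hi_def endpoint_def inv_branch_eq of_nat_diff)

lemma lo_False: "lo k False = hi k True"
  by (simp add: lo_def hi_def inv_branch_eq add.commute)

lemma endpoint_less: "k \<in> Kset q \<Longrightarrow> endpoint k < endpoint (k - 1)"
  using lo_less_hi[of k True] lo_less_hi[of k False] Kset_bounds[of k]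
  by (simp add: lo_True lo_False hi_False)

lemma endpoint_antimono:
  assumes "(q + 1) div 2 \<le> i + 1" "i \<le> j" "j \<le> q - 1"
  shows "endpoint j \<le> endpoint i"
  using assms(2,3)
proof (induction j rule: dec_induct)
  case (step n)
  then have "Suc n \<in> Kset q" using assms(1) by (simp add: Kset_def)
  from endpoint_less[OF this] step show ?case by simp
qed simp

lemma endpoint_last: "endpoint (q - 1) = 0"
  using sq_self[of q] q_ge_2 by (simp add: endpoint_def of_nat_diff)

lemma endpoint_middle: "endpoint ((q + 1) div 2 - 1) = 1"
proof -
  obtain m where q: "q = 2 * m + 1" using odd_q by (auto elim!: oddE)
  have "s (real m + 1) = s (real q - real m)" by (simp add: q)
  also have "\<dots> = s (real m)" using q by (intro sq_reflect) simp
  finally have "s (real m + 1) = s (real m)" .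
  moreover have "(q + 1) div 2 - 1 = m" "0 < s (real m)"
    using q q_ge_5 by (auto intro!: sq_pos)
  ultimately show ?thesis by (simp add: endpoint_def)
qed

lemma piece_bounds:
  assumes "k \<in> Kset q"
  shows "endpoint k \<le> lo k b" "hi k b \<le> endpoint (k - 1)" "0 \<le> lo k b" "hi k b \<le> 1"
proof -
  note k = Kset_bounds[OF assms]
  show "endpoint k \<le> lo k b" "hi k b \<le> endpoint (k - 1)"
    using lo_less_hi[OF assms, of True] lo_less_hi[OF assms, of False] k
    by (cases b; simp add: lo_True lo_False hi_False)+
  moreover have "endpoint (q - 1) \<le> endpoint k" "endpoint (k - 1) \<le> endpoint ((q + 1) div 2 - 1)"
    using k by (intro endpoint_antimono; simp)+
  ultimately show "0 \<le> lo k b" "hi k b \<le> 1"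
    using endpoint_last endpoint_middle by linarith+
qed

lemma pieces_disjoint:
  assumes "k \<in> Kset q" "k' \<in> Kset q" "(k, b) \<noteq> (k', b')"
  shows "{lo k b<..<hi k b} \<inter> {lo k' b'..hi k' b'} = {}"
proof -
  have "hi k' b' \<le> lo k b \<or> hi k b \<le> lo k' b'"
  proof (cases k k' rule: linorder_cases)
    case less
    then have "endpoint (k' - 1) \<le> endpoint k"
      using Kset_bounds[OF assms(1)] Kset_bounds[OF assms(2)] by (intro endpoint_antimono) auto
    then show ?thesis using piece_bounds[OF assms(1), of b] piece_bounds[OF assms(2), of b'] by linarith
  next
    case greater
    then have "endpoint (k - 1) \<le> endpoint k'"
      using Kset_bounds[OF assms(1)] Kset_bounds[OF assms(2)] by (intro endpoint_antimono) auto
    then show ?thesis using piece_bounds[OF assms(1), of b] piece_bounds[OF assms(2), of b'] by linarith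
  next
    case equal
    then show ?thesis using assms(3) by (cases b; cases b') (auto simp: lo_False)
  qed
  then show ?thesis by auto
qed

lemma pieces_cover:
  assumes "x \<in> {0..1}"
  shows "\<exists>k\<in>Kset q. \<exists>b. x \<in> {lo k b..hi k b}"
proof -
  have "(q + 1) div 2 - 1 < q - 1" "endpoint (q - 1) \<le> x" "x \<le> endpoint ((q + 1) div 2 - 1)"
    using q_ge_5 assms endpoint_last endpoint_middle by auto
  then obtain k where k: "k \<in> {(q + 1) div 2 - 1<..q - 1}" "endpoint k \<le> x" "x \<le> endpoint (k - 1)"
    by (blast dest: discrete_crossing)
  then have K: "k \<in> Kset q" by (auto simp: Kset_def)
  have "lo k True = endpoint k" "lo k False = hi k True" "hi k False = endpoint (k - 1)"
    using Kset_bounds[OF K] by (simp_all add: lo_True lo_False hi_False)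
  then have "x \<in> {lo k True..hi k True} \<or> x \<in> {lo k False..hi k False}"
    using k by auto
  with K show ?thesis by blast
qed

lemma farey_eq_Eps:
  "farey q x = (SOME y. \<exists>k\<in>Kset q. \<exists>b. x \<in> {lo k b..hi k b} \<and> y = mob (branch k b) x)"
  unfolding farey_def lo_def hi_def inv_branch_def branch_def by (simp add: ex_bool_eq)

lemma branch_inv_branch_cancel:
  assumes "k \<in> Kset q" "0 \<le> y"
  shows "mob (branch k b) (mob (inv_branch k b) y) = y"
    and "mob_den (branch k b) (mob (inv_branch k b) y) * mob_den (inv_branch k b) y = 1"
  using inv_branch_den_ge[OF assms, of b]
  by (intro mob_mob_inverse branch_mult_inv_branch; simp)+

lemma mob_branch_closed_piece:
  assumes "k \<in> Kset q" "x \<in> {lo k b..hi k b}"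
  shows "mob (branch k b) x \<in> {0..1}"
    and "mob_den (branch k b) x * mob_den (inv_branch k b) (mob (branch k b) x) = 1"
proof -
  obtain y where "y \<in> {0..1}" "x = mob (inv_branch k b) y"
    using assms inv_branch_image(1) by blast
  with branch_inv_branch_cancel[OF assms(1), of y b]
  show "mob (branch k b) x \<in> {0..1}"
    and "mob_den (branch k b) x * mob_den (inv_branch k b) (mob (branch k b) x) = 1"
    by simp_all
qed

lemma farey_on_piece:
  assumes "k \<in> Kset q" "x \<in> {lo k b<..<hi k b}"
  shows "farey q x = mob (branch k b) x"
proof -
  let ?P = "\<lambda>y. \<exists>k\<in>Kset q. \<exists>b. x \<in> {lo k b..hi k b} \<and> y = mob (branch k b) x"
  have "?P (mob (branch k b) x)" using assms by (intro bexI[of _ k] exI[of _ b]) auto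
  moreover have "y = mob (branch k b) x" if "?P y" for y
  proof -
    from that obtain k' b' where k': "k' \<in> Kset q" "x \<in> {lo k' b'..hi k' b'}"
      and y: "y = mob (branch k' b') x" by blast
    have "(k, b) = (k', b')"
    proof (rule ccontr)
      assume "(k, b) \<noteq> (k', b')"
      from pieces_disjoint[OF assms(1) k'(1) this] assms(2) k'(2) show False by auto
    qed
    then show ?thesis using y by simp
  qed
  ultimately show ?thesis unfolding farey_eq_Eps by (rule some_equality)
qed

lemma farey_open_piece:
  assumes "k \<in> Kset q" "x \<in> {lo k b<..<hi k b}"
  shows "farey q x \<in> {0<..<1}"
proof -
  obtain y where y: "y \<in> {0<..<1}" "x = mob (inv_branch k b) y"
    using assms inv_branch_image(2) by blast
  have "farey q x = mob (branch k b) x" by (rule farey_on_piece[OF assms])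
  also have "\<dots> = y" using y branch_inv_branch_cancel(1)[OF assms(1), of y b] by simp
  finally show ?thesis using y(1) by simp
qed

lemma farey_maps_into:
  assumes "x \<in> {0..1}"
  shows "farey q x \<in> {0..1}"
proof -
  obtain k b where "k \<in> Kset q" "x \<in> {lo k b..hi k b}"
    using pieces_cover[OF assms] by blast
  then have "\<exists>y. \<exists>k\<in>Kset q. \<exists>b. x \<in> {lo k b..hi k b} \<and> y = mob (branch k b) x"
    by blast
  then show ?thesis
    unfolding farey_eq_Eps by (rule someI2_ex) (use mob_branch_closed_piece(1) in blast)
qed

lemma Lambda_q_eq: "Lambda_q q = (\<lambda>(k, b). inv_branch k b) ` (Kset q \<times> UNIV)"
proof -
  have "Kset q \<times> UNIV = Kset q \<times> {True} \<union> Kset q \<times> {False}" by auto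
  moreover have "(\<lambda>(k, b). inv_branch k b) ` (Kset q \<times> {c}) = (\<lambda>k. inv_branch k c) ` Kset q" for c
    by force
  ultimately show ?thesis
    unfolding Lambda_q_def by (simp add: image_Un inv_branch_def branch_def)
qed

lemma farey_partition_eq:
  "farey_partition q = (\<lambda>(k, b). {lo k b<..<hi k b}) ` (Kset q \<times> UNIV)"
  unfolding farey_partition_def Lambda_q_eq image_image
  by (intro image_cong refl) (clarsimp simp: inv_branch_image(2))

lemma branch_den_on_piece:
  assumes "k \<in> Kset q" "x \<in> {lo k b..hi k b}"
  shows "0 < mob_den (branch k b) x" "mob_den (branch k b) x \<le> 1"
proof -
  let ?y = "mob (branch k b) x"
  have "1 \<le> mob_den (inv_branch k b) ?y"
    using inv_branch_den_ge[OF assms(1), of ?y b] mob_branch_closed_piece(1)[OF assms] by auto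
  moreover have "mob_den (branch k b) x = 1 / mob_den (inv_branch k b) ?y"
    using mob_branch_closed_piece(2)[OF assms] by (auto simp: eq_divide_eq)
  ultimately show "0 < mob_den (branch k b) x" "mob_den (branch k b) x \<le> 1"
    by simp_all
qed

lemma farey_strict_mono_on_piece:
  assumes "k \<in> Kset q"
  shows "strict_mono_on {lo k True<..<hi k True} (farey q)"
proof -
  have "strict_mono_on {lo k True<..<hi k True} (mob (branch k True))"
    using branch_den_on_piece(1)[OF assms] by (intro mob_strict_mono_on) (auto simp: det_branch)
  then show ?thesis by (auto simp: monotone_on_def farey_on_piece[OF assms])
qed

lemma farey_strict_antimono_on_piece:
  assumes "k \<in> Kset q"
  shows "strict_antimono_on {lo k False<..<hi k False} (farey q)"
proof -
  have "strict_antimono_on {lo k False<..<hi k False} (mob (branch k False))"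
    using branch_den_on_piece(1)[OF assms] by (intro mob_strict_antimono_on) (auto simp: det_branch)
  then show ?thesis by (auto simp: monotone_on_def farey_on_piece[OF assms])
qed

lemma farey_has_derivative:
  assumes "k \<in> Kset q" "x \<in> {lo k b<..<hi k b}"
  shows "(farey q has_real_derivative det (branch k b) / (mob_den (branch k b) x)\<^sup>2) (at x)"
proof -
  have "x \<in> {lo k b..hi k b}" using assms(2) by simp
  then have "mob_den (branch k b) x \<noteq> 0"
    using branch_den_on_piece(1)[OF assms(1)] by force
  from has_real_derivative_mob[OF this] show ?thesis
    by (rule has_field_derivative_transform_within_open[OF _ open_greaterThanLessThan assms(2)])
       (simp add: farey_on_piece[OF assms(1)])
qed

lemma deriv_farey:
  "k \<in> Kset q \<Longrightarrow> x \<in> {lo k b<..<hi k b} \<Longrightarrow>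
    deriv (farey q) x = det (branch k b) / (mob_den (branch k b) x)\<^sup>2"
  by (rule DERIV_imp_deriv[OF farey_has_derivative])

lemma deriv_farey_has_derivative:
  assumes "k \<in> Kset q" "x \<in> {lo k b<..<hi k b}"
  shows "(deriv (farey q) has_real_derivative
           - 2 * branch k b $2$1 * det (branch k b) / (mob_den (branch k b) x)^3) (at x)"
proof -
  have "x \<in> {lo k b..hi k b}" using assms(2) by simp
  then have "mob_den (branch k b) x \<noteq> 0"
    using branch_den_on_piece(1)[OF assms(1)] by force
  from has_real_derivative_inverse_mob_den_square[OF this] show ?thesis
    by (rule has_field_derivative_transform_within_open[OF _ open_greaterThanLessThan assms(2)])
       (simp add: deriv_farey[OF assms(1)])
qed

lemma abs_deriv_farey:
  assumes "k \<in> Kset q" "x \<in> {lo k b<..<hi k b}"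
  shows "\<bar>deriv (farey q) x\<bar> = (mob_den (inv_branch k b) (farey q x))\<^sup>2"
proof -
  have "mob_den (branch k b) x * mob_den (inv_branch k b) (farey q x) = 1"
    using mob_branch_closed_piece(2)[OF assms(1)] assms(2) farey_on_piece[OF assms] by simp
  then have "mob_den (inv_branch k b) (farey q x) = 1 / mob_den (branch k b) x"
    by (auto simp: eq_divide_eq mult.commute)
  moreover have "\<bar>det (branch k b)\<bar> = 1" by (simp add: det_branch)
  ultimately show ?thesis
    by (simp add: deriv_farey[OF assms] abs_divide power_one_over)
qed

lemma farey_piecewise_monotonic: "piecewise_monotonic_system {0..1} (farey q) (farey_partition q)"
proof -
  let ?ends = "(\<lambda>(k, b). lo k b) ` (Kset q \<times> UNIV) \<union>
                (\<lambda>(k, b). hi k b) ` (Kset q \<times> UNIV)"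
  have ends: "{0..1} - \<Union>(farey_partition q) \<subseteq> ?ends"
  proof
    fix x assume x: "x \<in> {0..1} - \<Union>(farey_partition q)"
    then obtain k b where k: "k \<in> Kset q" "x \<in> {lo k b..hi k b}"
      using pieces_cover by blast
    moreover from this x have "x \<notin> {lo k b<..<hi k b}"
      by (auto simp: farey_partition_eq)
    ultimately have "x = lo k b \<or> x = hi k b" by auto
    with k(1) show "x \<in> ?ends" by (auto intro: rev_image_eqI[of "(k, b)"])
  qed
  have "negligible ?ends" using finite_Kset by (intro negligible_finite) simp
  then have "negligible ({0..1} - \<Union>(farey_partition q))"
    using ends by (rule negligible_subset)
  moreover have "pairwise disjnt (farey_partition q)"
    unfolding farey_partition_eq
  proof (rule pairwise_imageI)
    fix x y :: "nat \<times> bool"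
    assume "x \<in> Kset q \<times> UNIV" "y \<in> Kset q \<times> UNIV" "x \<noteq> y"
    then have "{lo (fst x) (snd x)<..<hi (fst x) (snd x)} \<inter> {lo (fst y) (snd y)..hi (fst y) (snd y)} = {}"
      by (intro pieces_disjoint) auto
    then show "disjnt ((\<lambda>(k, b). {lo k b<..<hi k b}) x) ((\<lambda>(k, b). {lo k b<..<hi k b}) y)"
      by (cases x; cases y) (auto simp: disjnt_iff disjoint_iff)
  qed
  moreover have "I \<noteq> {} \<and> open I \<and> is_interval I \<and> I \<subseteq> {0..1} \<and> continuous_on I (farey q) \<and>
      (strict_mono_on I (farey q) \<or> strict_antimono_on I (farey q))" if "I \<in> farey_partition q" for I
  proof -
    obtain k b where k: "k \<in> Kset q" and I: "I = {lo k b<..<hi k b}"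
      using \<open>I \<in> farey_partition q\<close> by (auto simp: farey_partition_eq)
    have "continuous_on I (farey q)"
      unfolding I using farey_has_derivative[OF k]
      by (intro continuous_at_imp_continuous_on ballI DERIV_isCont) blast
    moreover have "strict_mono_on I (farey q) \<or> strict_antimono_on I (farey q)"
      unfolding I using farey_strict_mono_on_piece[OF k] farey_strict_antimono_on_piece[OF k]
      by (cases b) auto
    ultimately show ?thesis
      using lo_less_hi[OF k, of b] piece_bounds(3,4)[OF k, of b] by (auto simp: I is_interval_1)
  qed
  ultimately show ?thesis
    unfolding piecewise_monotonic_system_def
    using farey_maps_into by (auto simp: negligible_iff_null_sets)
qed

lemma lam_gt_1: "1 < lam q"
  using one_less_sq[of q 2] sq_two[of q] q_ge_5 by simp

lemma s_near_q: "s (real q - 1) = 1" "s (real q - 2) = lam q"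
  using sq_reflect[of q 1] sq_reflect[of q 2] sq_one[OF q_ge_2] sq_two[OF q_ge_2] q_ge_2 by simp_all

lemma inv_branch_last: "inv_branch (q - 1) True = mat2 1 0 (lam q) 1"
  using s_near_q sq_self[of q] q_ge_2 by (simp add: inv_branch_eq of_nat_diff)

lemma branch_last: "branch (q - 1) True = mat2 1 0 (- lam q) 1"
  using s_near_q sq_self[of q] q_ge_2 by (simp add: branch_eq of_nat_diff)

lemma last_piece: "{lo (q - 1) True<..<hi (q - 1) True} = {0<..<1 / (lam q + 1)}"
  unfolding lo_def hi_def inv_branch_last by (simp add: add.commute)

lemma farey_last_piece:
  assumes "x \<in> {0<..<1 / (lam q + 1)}"
  shows "farey q x = x / (1 - lam q * x)" "x \<le> farey q x"
    and "deriv (farey q) x = (lam q * farey q x + 1)\<^sup>2"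
proof -
  note x = assms[folded last_piece]
  have "farey q x = mob (branch (q - 1) True) x"
    using farey_on_piece[OF last_in_Kset x] .
  then show eq: "farey q x = x / (1 - lam q * x)" unfolding branch_last by simp
  have den: "0 < 1 - lam q * x" "1 - lam q * x \<le> 1"
    using branch_den_on_piece[OF last_in_Kset, of x True] x unfolding branch_last by auto
  then show "x \<le> farey q x"
    using assms by (simp add: eq le_divide_eq)
  have "0 < deriv (farey q) x"
    using den unfolding deriv_farey[OF last_in_Kset x] branch_last by (simp add: det_mat2)
  then show "deriv (farey q) x = (lam q * farey q x + 1)\<^sup>2"
    using abs_deriv_farey[OF last_in_Kset x] unfolding inv_branch_last by simp
qed

lemma distortion_bound:
  assumes "k \<in> Kset q" "x \<in> {lo k b<..<hi k b}"
  shows "\<bar>deriv (deriv (farey q)) x / (deriv (farey q) x)\<^sup>2\<bar> \<le> 2 / sin (pi / real q)"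
proof -
  let ?w = "mob_den (branch k b) x" and ?c = "branch k b $2$1" and ?D = "det (branch k b)"
  have w: "0 < ?w" "?w \<le> 1"
    using branch_den_on_piece[OF assms(1), of x b] assms(2) by auto
  have "\<bar>?c\<bar> \<le> 1 / sin (pi / real q)"
    using abs_sq_le[OF q_ge_2] by (simp add: branch_eq)
  moreover have "\<bar>deriv (deriv (farey q)) x / (deriv (farey q) x)\<^sup>2\<bar> = 2 * \<bar>?c\<bar> * ?w"
    unfolding DERIV_imp_deriv[OF deriv_farey_has_derivative[OF assms]] deriv_farey[OF assms]
    using w by (simp add: det_branch field_simps power2_eq_square power3_eq_cube abs_mult)
  ultimately show ?thesis
    using w sin_pi_div_pos[OF q_ge_2] mult_mono[of "\<bar>?c\<bar>" "1 / sin (pi / real q)" ?w 1]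
    by simp
qed

lemma one_less_inv_branch_22:
  assumes "k \<in> Kset q" "(k, b) \<noteq> (q - 1, True)"
  shows "1 < inv_branch k b $2$2"
proof (cases b)
  case True
  then have "k + 2 \<le> q" using assms Kset_bounds[OF assms(1)] by auto
  then have "1 < s (real k)"
    using Kset_bounds[OF assms(1)] by (intro one_less_sq q_ge_2) auto
  then show ?thesis using True by (simp add: inv_branch_eq)
next
  case False
  then show ?thesis using s_bounds[OF assms(1)] by (simp add: inv_branch_eq)
qed

lemma inv_branch_22_le_abs_deriv_farey:
  assumes "k \<in> Kset q" "x \<in> {lo k b<..<hi k b}"
  shows "(inv_branch k b $2$2)\<^sup>2 \<le> \<bar>deriv (farey q) x\<bar>"
proof -
  have "0 < farey q x" using farey_open_piece[OF assms] by simp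
  then show ?thesis
    using inv_branch_den_ge[OF assms(1), of "farey q x" b] abs_deriv_farey[OF assms]
    by (simp add: power_mono)
qed

lemma farey_uniformly_expanding:
  assumes "0 < \<epsilon>"
  shows "\<exists>\<rho>>1. \<forall>x \<in> \<Union>(farey_partition q) - {-\<epsilon><..<\<epsilon>} \<inter> {0<..<1 / (lam q + 1)}.
           \<rho> \<le> \<bar>deriv (farey q) x\<bar>"
proof -
  let ?A = "Kset q \<times> UNIV - {(q - 1, True)}"
  define \<rho>\<^sub>0 where "\<rho>\<^sub>0 = Min ((\<lambda>(k, b). (inv_branch k b $2$2)\<^sup>2) ` ?A)"
  have "(q - 1, False) \<in> ?A" using last_in_Kset by simp
  then have ne: "(\<lambda>(k, b). (inv_branch k b $2$2)\<^sup>2) ` ?A \<noteq> {}" by blast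
  have "1 < (inv_branch k b $2$2)\<^sup>2" if "(k, b) \<in> ?A" for k b
    using one_less_inv_branch_22[of k b] that by (auto intro: one_less_power)
  then have "1 < \<rho>\<^sub>0"
    unfolding \<rho>\<^sub>0_def using finite_Kset ne by (subst Min_gr_iff) auto
  moreover have "1 < (lam q * \<epsilon> + 1)\<^sup>2"
    using lam_gt_1 assms by (simp add: one_less_power)
  moreover have "min \<rho>\<^sub>0 ((lam q * \<epsilon> + 1)\<^sup>2) \<le> \<bar>deriv (farey q) x\<bar>"
    if x: "x \<in> \<Union>(farey_partition q) - {-\<epsilon><..<\<epsilon>} \<inter> {0<..<1 / (lam q + 1)}" for x
  proof -
    obtain k b where k: "k \<in> Kset q" and xk: "x \<in> {lo k b<..<hi k b}"
      using x by (auto simp: farey_partition_eq)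
    show ?thesis
    proof (cases "(k, b) = (q - 1, True)")
      case True
      with xk have "x \<in> {lo (q - 1) True<..<hi (q - 1) True}" by simp
      then have x0: "x \<in> {0<..<1 / (lam q + 1)}" unfolding last_piece .
      then have "\<epsilon> \<le> farey q x" using x farey_last_piece(2)[OF x0] by auto
      then have "(lam q * \<epsilon> + 1)\<^sup>2 \<le> (lam q * farey q x + 1)\<^sup>2"
        using lam_gt_1 assms by (intro power_mono) auto
      then show ?thesis using farey_last_piece(3)[OF x0] by simp
    next
      case False
      then have "\<rho>\<^sub>0 \<le> (inv_branch k b $2$2)\<^sup>2"
        unfolding \<rho>\<^sub>0_def using k finite_Kset by (intro Min_le) force+
      then show ?thesis using inv_branch_22_le_abs_deriv_farey[OF k xk] by simp
    qed
  qed
  ultimately show ?thesis by (intro exI[of _ "min \<rho>\<^sub>0 ((lam q * \<epsilon> + 1)\<^sup>2)"]) simp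
qed

lemma indifferent_fixed_point_0:
  defines "I\<^sub>0 \<equiv> {0<..<1 / (lam q + 1)}"
  shows "(farey q \<longlongrightarrow> 0) (at 0 within I\<^sub>0)"
    and "(deriv (farey q) \<longlongrightarrow> 1) (at 0 within I\<^sub>0)"
    and "mono_on ({0<..} \<inter> I\<^sub>0) (deriv (farey q))"
proof -
  have "((\<lambda>x. x / (1 - lam q * x)) \<longlongrightarrow> 0 / (1 - lam q * 0)) (at 0 within I\<^sub>0)"
    by (intro tendsto_intros) auto
  then have "((\<lambda>x. x / (1 - lam q * x)) \<longlongrightarrow> 0) (at 0 within I\<^sub>0)" by simp
  then show lim: "(farey q \<longlongrightarrow> 0) (at 0 within I\<^sub>0)"
    by (rule Lim_transform_within[OF _ zero_less_one]) (simp add: I\<^sub>0_def farey_last_piece(1))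
  have "((\<lambda>x. (lam q * farey q x + 1)\<^sup>2) \<longlongrightarrow> (lam q * 0 + 1)\<^sup>2) (at 0 within I\<^sub>0)"
    by (intro tendsto_intros lim)
  then have "((\<lambda>x. (lam q * farey q x + 1)\<^sup>2) \<longlongrightarrow> 1) (at 0 within I\<^sub>0)" by simp
  then show "(deriv (farey q) \<longlongrightarrow> 1) (at 0 within I\<^sub>0)"
    by (rule Lim_transform_within[OF _ zero_less_one]) (simp_all add: I\<^sub>0_def farey_last_piece(3))
  show "mono_on ({0<..} \<inter> I\<^sub>0) (deriv (farey q))"
  proof (rule monotone_onI)
    fix x y assume xy: "x \<in> {0<..} \<inter> I\<^sub>0" "y \<in> {0<..} \<inter> I\<^sub>0" "x \<le> y"
    have "farey q x \<le> farey q y"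
      using farey_strict_mono_on_piece[OF last_in_Kset] xy unfolding I\<^sub>0_def last_piece
      by (auto simp: strict_mono_on_leD)
    moreover have "0 \<le> farey q x"
      using farey_last_piece(2)[of x] xy by (simp add: I\<^sub>0_def)
    ultimately show "deriv (farey q) x \<le> deriv (farey q) y"
      using xy lam_gt_1 by (simp add: I\<^sub>0_def farey_last_piece(3) power_mono)
  qed
qed

lemma farey_twice_differentiable:
  assumes "I \<in> farey_partition q" "x \<in> I"
  shows "farey q differentiable (at x)" "deriv (farey q) differentiable (at x)"
proof -
  obtain k b where "k \<in> Kset q" "x \<in> {lo k b<..<hi k b}"
    using assms by (auto simp: farey_partition_eq)
  from farey_has_derivative[OF this] deriv_farey_has_derivative[OF this]
  show "farey q differentiable (at x)" "deriv (farey q) differentiable (at x)"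
    by (auto simp: real_differentiable_def)
qed

lemma farey_AFN: "AFN_with {0..1} (farey q) (farey_partition q) {{0<..<1 / (lam q + 1)}} (\<lambda>I. 0)"
proof -
  let ?I\<^sub>0 = "{0<..<1 / (lam q + 1)}"
  have "\<exists>C. \<forall>x\<in>\<Union>(farey_partition q).
      \<bar>deriv (deriv (farey q)) x / (deriv (farey q) x)\<^sup>2\<bar> \<le> C"
    using distortion_bound
    by (intro exI[of _ "2 / sin (pi / real q)"]) (auto simp: farey_partition_eq)
  moreover have "?I\<^sub>0 \<in> farey_partition q"
    using last_in_Kset by (force simp: farey_partition_eq simp flip: last_piece)
  moreover have "0 \<in> frontier ?I\<^sub>0"
    using lam_gt_1 by (simp add: frontier_def)
  moreover have "finite ((\<lambda>I. farey q ` I) ` farey_partition q)"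
    using finite_Kset by (simp add: farey_partition_eq)
  ultimately show ?thesis
    unfolding AFN_with_def
    using farey_piecewise_monotonic farey_twice_differentiable indifferent_fixed_point_0
      farey_uniformly_expanding
    by (simp add: monotone_on_def)
qed

end

theorem proposition2p3:
  fixes q :: nat
  assumes "odd q" and "q \<ge> 5"
  shows "AFN_map {0..1} (farey q) (farey_partition q) \<and>
         AFN_with {0..1} (farey q) (farey_partition q) {{0<..<1 / (lam q + 1)}} (\<lambda>I. 0) \<and>
         (\<lambda>I. (0::real)) ` {{0<..<1 / (lam q + 1)}} = {0}"
proof -
  interpret generalized_farey q
    using assms by unfold_locales
  show ?thesis
    using farey_AFN unfolding AFN_map_def by auto
qed

end
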